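(* Let $K$ be a biquadratic bicyclic number field with quadratic subfields $k_1,k_2,k_3$ and let $\eta\in\mathcal{O}_K^\times$. Then $\eta$ can be written $\eta=\rho^2/r$ with $\rho\in\mathcal{O}_K$ and $r\in\mathbb{Q}$ if and only if $\eta\in\mathcal{O}_K^*$. In particular, $\pm(\mathcal{O}_K^\times)^{2}\subseteq\mathcal{O}_K^*$.
   Context: $\mathcal{O}_k^\times$ is the unit group of the ring of integers of a number field $k$. For a quadratic field $k_i$, $\mathcal{O}_{k_i}^*=\{\eta\in\mathcal{O}_{k_i}^\times: N_{k_i/\mathbb{Q}}(\eta)=+1\}$. If $K\subset\mathbb{R}$, $\mathcal{O}_K^*$ is the set of $\eta\in\mathcal{O}_{k_1}^\times\mathcal{O}_{k_2}^\times\mathcal{O}_{k_3}^\times$ that are totally positive or totally negative; if $K\not\subset\mathbb{R}$, $\mathcal{O}_K^*=\mathcal{O}_{k_1}^*\mathcal{O}_{k_2}^*\mathcal{O}_{k_3}^*$. $(\mathcal{O}_K^\times)^2$ denotes the group of squares of units. *)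

theory Defs
  imports Complex_Main "HOL-Computational_Algebra.Polynomial" "HOL-Computational_Algebra.Squarefree"
begin

text \<open>Quadratic field Q(s) inside the complex numbers, where s is a square root of a
  non-square rational.\<close>
definition quad_field :: "complex \<Rightarrow> complex set" where
  "quad_field s = {of_rat x + of_rat y * s | x y. True}"

definition biquad_field :: "int \<Rightarrow> int \<Rightarrow> complex set" where
  "biquad_field a b = {of_rat x + of_rat y * csqrt (of_int a) + of_rat z * csqrt (of_int b)
      + of_rat w * (csqrt (of_int a) * csqrt (of_int b)) | x y z w. True}"

definition ring_of_integers :: "complex set \<Rightarrow> complex set" where
  "ring_of_integers F = {x \<in> F. algebraic_int x}"

definition unit_group :: "complex set \<Rightarrow> complex set" where
  "unit_group F = {x \<in> ring_of_integers F. x \<noteq> 0 \<and> inverse x \<in> ring_of_integers F}"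

definition quad_norm_is :: "complex \<Rightarrow> complex \<Rightarrow> complex \<Rightarrow> bool" where
  "quad_norm_is s \<eta> n \<longleftrightarrow> (\<exists>x y. \<eta> = of_rat x + of_rat y * s \<and>
       n = (of_rat x)\<^sup>2 - (of_rat y)\<^sup>2 * s\<^sup>2)"

definition quad_norm_one_units :: "complex \<Rightarrow> complex set" where
  "quad_norm_one_units s = {\<eta> \<in> unit_group (quad_field s). quad_norm_is s \<eta> 1}"

text \<open>The four embeddings of Q(sqrt a, sqrt b): sqrt a -> e1 sqrt a, sqrt b -> e2 sqrt b.\<close>
definition biquad_conj_is :: "int \<Rightarrow> int \<Rightarrow> complex \<Rightarrow> int \<Rightarrow> int \<Rightarrow> complex \<Rightarrow> bool" where
  "biquad_conj_is a b \<eta> e1 e2 c \<longleftrightarrow> (\<exists>x y z w.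
      \<eta> = of_rat x + of_rat y * csqrt (of_int a) + of_rat z * csqrt (of_int b)
          + of_rat w * (csqrt (of_int a) * csqrt (of_int b)) \<and>
      c = of_rat x + of_int e1 * of_rat y * csqrt (of_int a) + of_int e2 * of_rat z * csqrt (of_int b)
          + of_int (e1 * e2) * of_rat w * (csqrt (of_int a) * csqrt (of_int b)))"

definition totally_positive :: "int \<Rightarrow> int \<Rightarrow> complex \<Rightarrow> bool" where
  "totally_positive a b \<eta> \<longleftrightarrow> (\<forall>e1\<in>{1,-1}. \<forall>e2\<in>{1,-1}. \<forall>c.
      biquad_conj_is a b \<eta> e1 e2 c \<longrightarrow> c \<in> \<real> \<and> Re c > 0)"

definition totally_negative :: "int \<Rightarrow> int \<Rightarrow> complex \<Rightarrow> bool" where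
  "totally_negative a b \<eta> \<longleftrightarrow> (\<forall>e1\<in>{1,-1}. \<forall>e2\<in>{1,-1}. \<forall>c.
      biquad_conj_is a b \<eta> e1 e2 c \<longrightarrow> c \<in> \<real> \<and> Re c < 0)"

definition set_prod3 :: "complex set \<Rightarrow> complex set \<Rightarrow> complex set \<Rightarrow> complex set" where
  "set_prod3 A B C = {u * v * w | u v w. u \<in> A \<and> v \<in> B \<and> w \<in> C}"

text \<open>The group O_K^* of the paper, for K = Q(sqrt a, sqrt b),
  k1 = Q(sqrt a), k2 = Q(sqrt b), k3 = Q(sqrt a sqrt b) = Q(sqrt(ab)).\<close>
definition OK_star :: "int \<Rightarrow> int \<Rightarrow> complex set" where
  "OK_star a b =
    (let s1 = csqrt (of_int a); s2 = csqrt (of_int b); s3 = s1 * s2 in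
     if biquad_field a b \<subseteq> \<real> then
       {\<eta> \<in> set_prod3 (unit_group (quad_field s1)) (unit_group (quad_field s2)) (unit_group (quad_field s3)).
          totally_positive a b \<eta> \<or> totally_negative a b \<eta>}
     else set_prod3 (quad_norm_one_units s1) (quad_norm_one_units s2) (quad_norm_one_units s3))"

end

theory Submission
  imports Defs "Jordan_Normal_Form.Char_Poly"
begin

text \<open>
  Let \<open>k\<^sub>1 = \<rat>(\<surd>a)\<close>, \<open>k\<^sub>2 = \<rat>(\<surd>b)\<close>, \<open>k\<^sub>3 = \<rat>(\<surd>ab)\<close>. Both sides of the equivalence amount to
  writing \<open>\<eta> = u\<^sub>1 u\<^sub>2 u\<^sub>3\<close> with units \<open>u\<^sub>i \<in> k\<^sub>i\<close> that all have the same norm \<open>n = \<plusminus>1\<close>.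

  If \<open>\<rho>\<^sup>2 = r \<eta>\<close> and \<open>\<sigma>\<close> is the automorphism of \<open>K\<close> fixing \<open>k\<^sub>i\<close>, the relative norm
  \<open>v\<^sub>i = \<rho> \<sigma>(\<rho>) / r\<close> satisfies \<open>v\<^sub>i\<^sup>2 = \<eta> \<sigma>(\<eta>)\<close>, so it is a unit of \<open>k\<^sub>i\<close>; all three have norm
  \<open>N(\<rho>) / r\<^sup>2\<close>, and \<open>v\<^sub>1 v\<^sub>2 v\<^sub>3 = \<eta> N(\<rho>) / r\<^sup>2\<close>. Conversely, for such \<open>u\<^sub>i\<close> and signs
  \<open>\<epsilon>\<^sub>1, \<epsilon>\<^sub>2\<close>, the element \<open>\<rho> = \<eta> + \<epsilon>\<^sub>1 u\<^sub>1 + \<epsilon>\<^sub>2 u\<^sub>2 + n \<epsilon>\<^sub>1 \<epsilon>\<^sub>2 u\<^sub>3\<close> satisfies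
  \<open>\<rho>\<^sup>2 = (Tr \<eta> + 2 (\<epsilon>\<^sub>1 Tr u\<^sub>1 + \<epsilon>\<^sub>2 Tr u\<^sub>2 + n \<epsilon>\<^sub>1 \<epsilon>\<^sub>2 Tr u\<^sub>3)) \<eta>\<close>, and one of the four choices of
  signs gives \<open>\<rho> \<noteq> 0\<close> because their sum is \<open>4 \<eta>\<close>.

  For real \<open>K\<close>, \<open>\<eta> = \<rho>\<^sup>2 / r\<close> has the sign of \<open>r\<close> at every
  embedding, and conversely a totally positive or negative \<open>\<eta> = u\<^sub>1 u\<^sub>2 u\<^sub>3\<close> has norms of equal sign,
  since \<open>\<sigma>(\<eta>) \<eta> = N(u\<^sub>j) N(u\<^sub>k) u\<^sub>i\<^sup>2\<close>. For imaginary \<open>K\<close> one of \<open>k\<^sub>1, k\<^sub>2\<close> is imaginary quadratic,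
  so its norms are positive and \<open>n = 1\<close>.
\<close>

section \<open>Algebraic integers\<close>

definition int_span :: "'a::comm_ring_1 set \<Rightarrow> 'a set" where
  "int_span S = {\<Sum>g\<in>S. of_int (c g) * g | c. True}"

lemma int_spanI: "x = (\<Sum>g\<in>S. of_int (c g) * g) \<Longrightarrow> x \<in> int_span S"
  unfolding int_span_def by blast

lemma int_spanE:
  assumes "x \<in> int_span S"
  obtains c where "x = (\<Sum>g\<in>S. of_int (c g) * g)"
  using assms unfolding int_span_def by blast

lemma int_span_zero: "0 \<in> int_span S"
  by (rule int_spanI[where c = "\<lambda>_. 0"]) simp

lemma int_span_base:
  assumes "finite S" "s \<in> S"
  shows "s \<in> int_span S"
proof (rule int_spanI[where c = "\<lambda>g. if g = s then 1 else 0"])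
  have "(\<Sum>g\<in>S. of_int (if g = s then 1 else 0) * g) = (\<Sum>g\<in>S. if g = s then s else 0)"
    by (rule sum.cong) auto
  then show "s = (\<Sum>g\<in>S. of_int (if g = s then 1 else 0) * g)"
    using assms by simp
qed

lemma int_span_add:
  assumes "x \<in> int_span S" "y \<in> int_span S"
  shows "x + y \<in> int_span S"
proof -
  obtain c d where "x = (\<Sum>g\<in>S. of_int (c g) * g)" "y = (\<Sum>g\<in>S. of_int (d g) * g)"
    using assms by (metis int_spanE)
  then show ?thesis
    by (intro int_spanI[where c = "\<lambda>g. c g + d g"]) (simp add: sum.distrib distrib_right)
qed

lemma int_span_of_int_mult:
  assumes "x \<in> int_span S"
  shows "of_int k * x \<in> int_span S"
proof -
  obtain c where "x = (\<Sum>g\<in>S. of_int (c g) * g)"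
    using assms by (rule int_spanE)
  then show ?thesis
    by (intro int_spanI[where c = "\<lambda>g. k * c g"]) (simp add: sum_distrib_left mult.assoc)
qed

lemma int_span_sum: "(\<And>i. i \<in> I \<Longrightarrow> f i \<in> int_span S) \<Longrightarrow> (\<Sum>i\<in>I. f i) \<in> int_span S"
  by (induction I rule: infinite_finite_induct) (simp_all add: int_span_zero int_span_add)

lemma int_span_mult_closed:
  assumes "\<And>s. s \<in> S \<Longrightarrow> w * s \<in> int_span S" "t \<in> int_span S"
  shows "w * t \<in> int_span S"
proof -
  obtain c where "t = (\<Sum>g\<in>S. of_int (c g) * g)"
    using assms(2) by (rule int_spanE)
  then have "w * t = (\<Sum>g\<in>S. of_int (c g) * (w * g))"
    by (simp add: sum_distrib_left algebra_simps)
  also have "\<dots> \<in> int_span S"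
    using assms(1) by (intro int_span_sum int_span_of_int_mult)
  finally show ?thesis .
qed

lemma algebraic_int_if_eigenvalue_of_int_mat:
  fixes z :: "'a::field_char_0"
  assumes "M \<in> carrier_mat n n" "eigenvalue (map_mat of_int M) z"
  shows "algebraic_int z"
proof -
  have "poly (map_poly of_int (char_poly M)) z = 0"
    using assms by (simp add: eigenvalue_root_char_poly of_int_hom.char_poly_hom)
  moreover have "lead_coeff (char_poly M) = 1"
    using degree_monic_char_poly[OF assms(1)] by simp
  ultimately show ?thesis
    unfolding algebraic_int_altdef_ipoly by blast
qed

text \<open>Multiplication by \<open>z\<close> on the \<open>\<int>\<close>-span of \<open>S\<close> is given by an integer matrix, and the
  vector listing \<open>S\<close> is an eigenvector for the eigenvalue \<open>z\<close>; it is nonzero because \<open>1 \<in> S\<close>.\<close>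
lemma algebraic_int_if_int_span_stable:
  fixes z :: "'a::field_char_0"
  assumes fin: "finite S" and one: "1 \<in> S" and stable: "\<And>s. s \<in> S \<Longrightarrow> z * s \<in> int_span S"
  shows "algebraic_int z"
proof -
  obtain gs where gs: "distinct gs" "set gs = S"
    using finite_distinct_list[OF fin] by blast
  define n where "n = length gs"
  have "\<exists>c. z * gs ! i = (\<Sum>g\<in>S. of_int (c g) * g)" if "i < n" for i
    using stable[of "gs ! i"] that gs(2) unfolding n_def by (metis int_spanE nth_mem)
  then obtain C where C: "\<And>i. i < n \<Longrightarrow> z * gs ! i = (\<Sum>g\<in>S. of_int (C i g) * g)"
    by metis
  define M :: "int mat" where "M = mat n n (\<lambda>(i, j). C i (gs ! j))"
  define v :: "'a vec" where "v = vec n (\<lambda>i. gs ! i)"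
  have M: "M \<in> carrier_mat n n"
    by (simp add: M_def)
  have sum_S: "(\<Sum>g\<in>S. f g) = (\<Sum>j = 0..<n. f (gs ! j))" for f :: "'a \<Rightarrow> 'a"
  proof -
    have "(\<Sum>g\<in>S. f g) = sum_list (map f gs)"
      using gs by (simp add: sum_list_distinct_conv_sum_set)
    then show ?thesis
      by (simp add: n_def sum_list_sum_nth)
  qed
  have "map_mat of_int M *\<^sub>v v = z \<cdot>\<^sub>v v"
  proof (rule eq_vecI)
    fix i assume "i < dim_vec (z \<cdot>\<^sub>v v)"
    then have i: "i < n"
      by (simp add: v_def)
    have "(map_mat of_int M *\<^sub>v v) $ i = (\<Sum>j = 0..<n. of_int (C i (gs ! j)) * gs ! j)"
      using i M by (simp add: scalar_prod_def v_def M_def)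
    also have "\<dots> = (z \<cdot>\<^sub>v v) $ i"
      using C[OF i] sum_S i by (simp add: v_def)
    finally show "(map_mat of_int M *\<^sub>v v) $ i = (z \<cdot>\<^sub>v v) $ i" .
  qed (use M in \<open>simp add: v_def\<close>)
  moreover have "v \<noteq> 0\<^sub>v n"
  proof
    obtain j where "j < n" "gs ! j = 1"
      using one gs(2) unfolding n_def by (metis in_set_conv_nth)
    then have "v $ j = 1"
      by (simp add: v_def)
    moreover assume "v = 0\<^sub>v n"
    ultimately show False
      using \<open>j < n\<close> by simp
  qed
  ultimately have "eigenvalue (map_mat of_int M) z"
    using M unfolding eigenvalue_def eigenvector_def by (intro exI[of _ v]) (simp add: v_def)
  with M show ?thesis
    by (rule algebraic_int_if_eigenvalue_of_int_mat)
qed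

lemma algebraic_int_power_reduce:
  assumes "algebraic_int (x::'a::field)"
  obtains m c where "m > 0" "x ^ m = (\<Sum>l<m. of_int (c l) * x ^ l)"
proof -
  obtain p where p: "lead_coeff p = 1" "\<forall>i. coeff p i \<in> \<int>" "poly p x = 0"
    using assms by (auto elim: algebraic_int.cases)
  have "\<forall>l. \<exists>k. coeff p l = of_int k"
    using p(2) by (meson Ints_cases)
  then obtain c where c: "\<And>l. coeff p l = of_int (c l)"
    by metis
  have "degree p \<noteq> 0"
  proof
    assume "degree p = 0"
    then have "p = [:1:]"
      using p(1) by (metis degree_0_id)
    then show False
      using p(3) by simp
  qed
  moreover have "0 = (\<Sum>l<degree p. coeff p l * x ^ l) + x ^ degree p"
    using p by (simp add: poly_altdef lessThan_Suc_atMost[symmetric])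
  then have "x ^ degree p = (\<Sum>l<degree p. of_int (- c l) * x ^ l)"
    by (simp add: c sum_negf eq_neg_iff_add_eq_0 add.commute)
  ultimately show ?thesis
    using that by (metis gr0I)
qed

lemma monomial_mult_in_int_span:
  fixes x y :: "'a::comm_ring_1"
  assumes x: "x ^ m = (\<Sum>l<m. of_int (c l) * x ^ l)" and "i < m" "j < n"
  shows "x * (x ^ i * y ^ j) \<in> int_span ((\<lambda>(i, j). x ^ i * y ^ j) ` ({..<m} \<times> {..<n}))"
    (is "_ \<in> int_span ?S")
proof -
  have mono: "x ^ l * y ^ j \<in> int_span ?S" if "l < m" for l
    using that \<open>j < n\<close> by (intro int_span_base) auto
  show ?thesis
  proof (cases "Suc i < m")
    case True
    then show ?thesis
      using mono[of "Suc i"] by (simp add: mult.assoc)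
  next
    case False
    then have "Suc i = m"
      using \<open>i < m\<close> by simp
    then have "x * (x ^ i * y ^ j) = x ^ m * y ^ j"
      by (auto simp: mult.assoc)
    also have "\<dots> = (\<Sum>l<m. of_int (c l) * (x ^ l * y ^ j))"
      unfolding x by (simp add: sum_distrib_right mult.assoc)
    also have "\<dots> \<in> int_span ?S"
      using mono by (intro int_span_sum int_span_of_int_mult) simp
    finally show ?thesis .
  qed
qed

lemma algebraic_int_plus_times:
  fixes x y :: "'a::field_char_0"
  assumes "algebraic_int x" "algebraic_int y"
  shows "algebraic_int (x + y)" and "algebraic_int (x * y)"
proof -
  obtain m c where m: "m > 0" "x ^ m = (\<Sum>l<m. of_int (c l) * x ^ l)"
    by (rule algebraic_int_power_reduce[OF assms(1)])
  obtain n d where n: "n > 0" "y ^ n = (\<Sum>l<n. of_int (d l) * y ^ l)"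
    by (rule algebraic_int_power_reduce[OF assms(2)])
  define S where "S = (\<lambda>(i, j). x ^ i * y ^ j) ` ({..<m} \<times> {..<n})"
  have S_swap: "S = (\<lambda>(j, i). y ^ j * x ^ i) ` ({..<n} \<times> {..<m})"
    unfolding S_def by (auto simp: mult.commute)
  have x_stable: "x * s \<in> int_span S" if "s \<in> S" for s
  proof -
    obtain i j where "i < m" "j < n" "s = x ^ i * y ^ j"
      using \<open>s \<in> S\<close> unfolding S_def by auto
    then show ?thesis
      unfolding S_def by (simp add: monomial_mult_in_int_span[OF m(2)])
  qed
  have y_stable: "y * s \<in> int_span S" if "s \<in> S" for s
  proof -
    obtain i j where "i < m" "j < n" "s = y ^ j * x ^ i"
      using \<open>s \<in> S\<close> unfolding S_swap by auto
    then show ?thesis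
      unfolding S_swap by (simp add: monomial_mult_in_int_span[OF n(2)])
  qed
  have "(\<lambda>(i, j). x ^ i * y ^ j) (0, 0) \<in> S"
    unfolding S_def using m(1) n(1) by (intro imageI) simp
  then have S: "finite S" "1 \<in> S"
    by (simp_all add: S_def)
  show "algebraic_int (x + y)"
  proof (rule algebraic_int_if_int_span_stable[OF S])
    fix s assume "s \<in> S"
    then show "(x + y) * s \<in> int_span S"
      using x_stable y_stable by (simp add: distrib_right int_span_add)
  qed
  show "algebraic_int (x * y)"
  proof (rule algebraic_int_if_int_span_stable[OF S])
    fix s assume "s \<in> S"
    then show "(x * y) * s \<in> int_span S"
      using int_span_mult_closed[OF x_stable y_stable[OF \<open>s \<in> S\<close>]] by (simp only: mult.assoc)
  qed
qed

lemmas algebraic_int_plus = algebraic_int_plus_times(1)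
lemmas algebraic_int_times = algebraic_int_plus_times(2)

lemma algebraic_int_of_square: "algebraic_int ((x::'a::field_char_0) ^ 2) \<Longrightarrow> algebraic_int x"
  by (rule algebraic_int_root[where p = "monom 1 2"]) (auto simp: poly_monom degree_monom_eq)

lemma rat_algebraic_int_unit:
  assumes "algebraic_int (of_rat q :: 'a::field_char_0)" "algebraic_int (of_rat (inverse q) :: 'a)"
    and "q \<noteq> 0"
  shows "q = 1 \<or> q = -1"
proof -
  obtain k l where "(of_rat q :: 'a) = of_int k" "(of_rat (inverse q) :: 'a) = of_int l"
    using assms(1,2) rational_algebraic_int_is_int by (metis Ints_cases Rats_of_rat)
  then have "q = of_int k" "inverse q = of_int l"
    by (metis of_rat_eq_iff of_rat_of_int_eq)+
  then have "k * l = 1"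
    using assms(3) by (metis of_int_eq_1_iff of_int_mult right_inverse)
  then show ?thesis
    using \<open>q = of_int k\<close> by (auto simp: zmult_eq_1_iff)
qed

section \<open>Square roots of squarefree integers\<close>

lemma rat_square_eq_int:
  assumes "(q::rat) ^ 2 = of_int n"
  obtains k where "q = of_int k" "k ^ 2 = n"
proof -
  have "algebraic_int (q ^ 2)"
    using assms by simp
  then have "algebraic_int q"
    by (rule algebraic_int_of_square)
  moreover have "q \<in> \<rat>"
    by (metis Rats_of_rat id_apply of_rat_eq_id)
  ultimately have "q \<in> \<int>"
    by (rule rational_algebraic_int_is_int)
  then obtain k where "q = of_int k"
    by (elim Ints_cases)
  moreover have "k ^ 2 = n"
    using assms calculation by (metis of_int_eq_iff of_int_power)
  ultimately show ?thesis
    using that by blast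
qed

lemma squarefree_not_rat_square:
  assumes "squarefree n" "n \<noteq> 1"
  shows "(q::rat) ^ 2 \<noteq> of_int n"
proof
  assume "q ^ 2 = of_int n"
  then obtain k where "k ^ 2 = n"
    by (elim rat_square_eq_int)
  then have "is_unit k"
    using squarefreeD[OF assms(1), of k] by simp
  then show False
    using \<open>k ^ 2 = n\<close> assms(2) by (auto simp: zmult_eq_1_iff power2_eq_square)
qed

lemma squarefree_product_not_rat_square:
  assumes sf: "squarefree a" "squarefree b" and "a \<noteq> b"
  shows "(q::rat) ^ 2 \<noteq> of_int (a * b)"
proof
  assume "q ^ 2 = of_int (a * b)"
  then obtain k where k: "k ^ 2 = a * b"
    by (elim rat_square_eq_int)
  have "a \<noteq> 0" "b \<noteq> 0"
    using sf by auto
  then have "k \<noteq> 0"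
    using k by auto
  have "multiplicity p a = multiplicity p b" if "prime p" for p
  proof -
    have "multiplicity p a + multiplicity p b = 2 * multiplicity p k"
      using k \<open>a \<noteq> 0\<close> \<open>b \<noteq> 0\<close> \<open>k \<noteq> 0\<close> \<open>prime p\<close>
      by (metis prime_elem_multiplicity_mult_distrib prime_elem_multiplicity_power_distrib
          prime_imp_prime_elem)
    moreover have "multiplicity p a \<le> 1" "multiplicity p b \<le> 1"
      using sf \<open>a \<noteq> 0\<close> \<open>b \<noteq> 0\<close> \<open>prime p\<close> squarefree_factorial_semiring'' by blast+
    ultimately show ?thesis
      by presburger
  qed
  then have "\<bar>a\<bar> = \<bar>b\<bar>"
    using multiplicity_eq_imp_eq[OF \<open>a \<noteq> 0\<close> \<open>b \<noteq> 0\<close>] by simp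
  then have "k ^ 2 = - (a ^ 2)"
    using k \<open>a \<noteq> b\<close> by (auto simp: abs_if power2_eq_square split: if_splits)
  moreover have "0 < a ^ 2"
    using \<open>a \<noteq> 0\<close> by simp
  ultimately show False
    using zero_le_power2[of k] by linarith
qed

section \<open>Quadratic norms and signs\<close>

lemma unit_group_mono: "F \<subseteq> G \<Longrightarrow> unit_group F \<subseteq> unit_group G"
  by (auto simp: unit_group_def ring_of_integers_def)

lemma unit_group_subset: "unit_group F \<subseteq> F"
  by (auto simp: unit_group_def ring_of_integers_def)

lemma quad_norm_is_rat:
  assumes "quad_norm_is s z m" "s ^ 2 = of_rat d"
  obtains x y where "z = of_rat x + of_rat y * s" "m = of_rat (x ^ 2 - y ^ 2 * d)"
  using assms by (auto simp: quad_norm_is_def of_rat_diff of_rat_mult of_rat_power)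

lemma quad_norm_is_nonneg:
  assumes "quad_norm_is s z (of_rat n)" "s ^ 2 = of_rat d" "d < 0"
  shows "n \<ge> 0"
proof -
  obtain x y where "of_rat n = (of_rat (x ^ 2 - y ^ 2 * d) :: complex)"
    using quad_norm_is_rat[OF assms(1,2)] by metis
  then have "n = x ^ 2 - y ^ 2 * d"
    by simp
  moreover have "y ^ 2 * d \<le> 0"
    using assms(3) by (simp add: mult_nonneg_nonpos)
  ultimately show ?thesis
    using zero_le_power2[of x] by linarith
qed

lemma complex_of_rat_eq_of_real: "(of_rat q :: complex) = of_real (of_rat q)"
  by (cases q) (simp add: of_rat_rat)

lemma real_sign_of_square:
  assumes "w \<in> \<real>" "w \<noteq> 0" "w\<^sup>2 = of_rat r * c"
  shows "c \<in> \<real> \<and> (0 < r \<longrightarrow> 0 < Re c) \<and> (r < 0 \<longrightarrow> Re c < 0)"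
proof -
  obtain t where t: "w = of_real t" "t \<noteq> 0"
    using assms(1,2) by (auto elim: Reals_cases)
  have "r \<noteq> 0"
    using assms(2,3) by auto
  then have "c = of_real (t\<^sup>2 / of_rat r)"
    using assms(3) t by (simp add: complex_of_rat_eq_of_real field_simps)
  then show ?thesis
    using t(2) by (simp add: divide_pos_neg)
qed

lemma rat_pos_if_real_product_pos:
  assumes "x \<in> \<real>" "y \<in> \<real>" "0 < Re x * Re y" "x * y = of_rat q * u\<^sup>2" "u \<in> \<real>" "u \<noteq> 0"
  shows "0 < q"
proof -
  obtain t where t: "u = of_real t" "t \<noteq> 0"
    using assms(5,6) by (auto elim: Reals_cases)
  have "Re x * Re y = Re (x * y)"
    using assms(1,2) by (auto elim!: Reals_cases)
  also have "\<dots> = of_rat q * t\<^sup>2"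
    unfolding assms(4) t complex_of_rat_eq_of_real[of q] by (simp flip: of_real_power of_real_mult)
  finally show ?thesis
    using assms(3) t(2) by (simp add: zero_less_mult_iff)
qed

lemma square_identity:
  fixes u1 u2 u3 v1 v2 v3 n e1 e2 :: "'a::comm_ring_1"
  assumes "u1 * v1 = n" "u2 * v2 = n" "u3 * v3 = n" "n * n = 1" "e1 * e1 = 1" "e2 * e2 = 1"
  shows "(u1 * u2 * u3 + e1 * u1 + e2 * u2 + n * e1 * e2 * u3)\<^sup>2 =
    (u1 * u2 * u3 + v1 * u2 * v3 + u1 * v2 * v3 + v1 * v2 * u3
      + 2 * (e1 * (u1 + v1) + e2 * (u2 + v2) + n * e1 * e2 * (u3 + v3))) * (u1 * u2 * u3)"
    (is "?L = ?R")
proof -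
  define e where "e = u1 * u2 * u3"
  define X where "X = e1 * u1 + e2 * u2 + n * e1 * e2 * u3"
  have "?L = e * e + (e1 * e1) * (u1 * u1) + (e2 * e2) * (u2 * u2)
      + (n * n) * (e1 * e1) * (e2 * e2) * (u3 * u3) + 2 * e * X + 2 * (e1 * e2) * (u1 * u2)
      + 2 * n * (e1 * e1) * (e2 * (u1 * u3)) + 2 * n * (e2 * e2) * (e1 * (u2 * u3))"
    by (simp add: e_def X_def power2_eq_square algebra_simps)
  also have "\<dots> = e * e + u1 * u1 + u2 * u2 + u3 * u3 + 2 * e * X + 2 * (e1 * e2) * (u1 * u2)
      + 2 * n * (e2 * (u1 * u3)) + 2 * n * (e1 * (u2 * u3))"
    by (simp only: assms(4-6) mult_1_left mult_1_right)
  also have "\<dots> = e * e + (u2 * v2) * (u3 * v3) * (u1 * u1) + (u1 * v1) * (u3 * v3) * (u2 * u2)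
      + (u1 * v1) * (u2 * v2) * (u3 * u3) + 2 * e * X + 2 * (n * (u3 * v3)) * (e1 * e2) * (u1 * u2)
      + 2 * (u2 * v2) * (e2 * (u1 * u3)) + 2 * (u1 * v1) * (e1 * (u2 * u3))"
    by (simp only: assms(1-4) mult_1_left mult_1_right)
  also have "\<dots> = ?R"
    by (simp add: e_def X_def algebra_simps)
  finally show ?thesis .
qed

definition rat_times_square :: "complex set \<Rightarrow> complex \<Rightarrow> bool" where
  "rat_times_square F \<eta> \<longleftrightarrow> (\<exists>\<rho> \<in> ring_of_integers F. \<exists>r :: rat. r \<noteq> 0 \<and> \<eta> = \<rho>\<^sup>2 / of_rat r)"

section \<open>The biquadratic field\<close>

locale biquadratic =
  fixes a b :: int
  assumes squarefree_a: "squarefree a" and squarefree_b: "squarefree b"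
    and a_neq_1: "a \<noteq> 1" and b_neq_1: "b \<noteq> 1" and a_neq_b: "a \<noteq> b"
begin

abbreviation K :: "complex set" where
  "K \<equiv> biquad_field a b"

definition A :: complex where
  "A = csqrt (of_int a)"

definition B :: complex where
  "B = csqrt (of_int b)"

definition elt :: "rat \<Rightarrow> rat \<Rightarrow> rat \<Rightarrow> rat \<Rightarrow> complex" where
  "elt x y u w = of_rat x + of_rat y * A + of_rat u * B + of_rat w * (A * B)"

lemma A_square: "A * A = of_int a"
  unfolding A_def by (metis power2_csqrt power2_eq_square)

lemma B_square: "B * B = of_int b"
  unfolding B_def by (metis power2_csqrt power2_eq_square)

lemma K_iff: "z \<in> K \<longleftrightarrow> (\<exists>x y u w. z = elt x y u w)"
  unfolding biquad_field_def elt_def A_def B_def by blast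

lemma K_cases:
  assumes "z \<in> K"
  obtains x y u w where "z = elt x y u w"
  using assms K_iff by blast

lemma elt_in_K [simp]: "elt x y u w \<in> K"
  using K_iff by blast

lemma elt_add: "elt x y u w + elt x' y' u' w' = elt (x + x') (y + y') (u + u') (w + w')"
  unfolding elt_def by (simp add: of_rat_add algebra_simps)

lemma elt_mult:
  "elt x y u w * elt x' y' u' w' =
    elt (x * x' + of_int a * y * y' + of_int b * u * u' + of_int (a * b) * w * w')
      (x * y' + y * x' + of_int b * (u * w' + w * u'))
      (x * u' + u * x' + of_int a * (y * w' + w * y'))
      (x * w' + w * x' + y * u' + u * y')"
  unfolding elt_def by (simp add: of_rat_add of_rat_mult algebra_simps flip: A_square B_square)

lemma of_rat_eq_elt: "of_rat q = elt q 0 0 0"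
  by (simp add: elt_def)

lemma B_not_rat: "B \<noteq> of_rat q"
proof
  assume "B = of_rat q"
  then have "of_rat (q ^ 2) = (of_rat (of_int b) :: complex)"
    using B_square by (simp add: power2_eq_square of_rat_mult)
  then show False
    using squarefree_not_rat_square[OF squarefree_b b_neq_1] by (simp only: of_rat_eq_iff)
qed

lemma rat_plus_rat_B_eq_0:
  assumes "of_rat x + of_rat u * B = 0"
  shows "x = 0 \<and> u = 0"
proof (cases "u = 0")
  case False
  then have "B = of_rat (- x / u)"
    using assms by (simp add: of_rat_minus of_rat_divide field_simps add_eq_0_iff)
  then show ?thesis
    using B_not_rat by blast
qed (use assms in simp)

lemma A_not_in_QB: "A \<noteq> of_rat p + of_rat q * B"
proof
  assume "A = of_rat p + of_rat q * B"
  then have "of_int a = (of_rat p + of_rat q * B) * (of_rat p + of_rat q * B)"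
    using A_square by simp
  also have "\<dots> = of_rat (p * p + q * q * of_int b) + of_rat (2 * p * q) * B"
    using B_square by (simp add: of_rat_add of_rat_mult algebra_simps)
  finally have "of_rat (p * p + q * q * of_int b - of_int a) + of_rat (2 * p * q) * B = 0"
    by (simp add: of_rat_diff)
  then have "p * p + q * q * of_int b - of_int a = 0" "2 * p * q = 0"
    using rat_plus_rat_B_eq_0 by blast+
  then have "p * p + q * q * of_int b = of_int a" "p * q = 0"
    by simp_all
  then consider "q ^ 2 * of_int b = of_int a" | "p ^ 2 = of_int a"
    by (auto simp: power2_eq_square)
  then show False
  proof cases
    case 1
    then have "(q * of_int b) ^ 2 = of_int (a * b)"
      by (simp add: power2_eq_square algebra_simps)
    then show False
      using squarefree_product_not_rat_square[OF squarefree_a squarefree_b a_neq_b] by blast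
  next
    case 2
    then show False
      using squarefree_not_rat_square[OF squarefree_a a_neq_1] by blast
  qed
qed

text \<open>Multiplying by the \<open>\<rat>(B)\<close>-conjugate of the coefficient \<open>y + w B\<close> of \<open>A\<close> reduces the
  linear independence of \<open>1, A, B, A B\<close> to \<open>A \<notin> \<rat>(B)\<close>.\<close>
lemma elt_eq_0_iff: "elt x y u w = 0 \<longleftrightarrow> x = 0 \<and> y = 0 \<and> u = 0 \<and> w = 0"
proof
  assume elt: "elt x y u w = 0"
  define D where "D = y * y - of_int b * w * w"
  have "elt (x * y - of_int b * u * w) D (u * y - x * w) 0 = elt x y u w * elt y 0 (- w) 0"
    by (simp add: elt_mult D_def algebra_simps)
  then obtain P Q where "of_rat P + of_rat D * A + of_rat Q * B = 0"
    using elt by (auto simp: elt_def)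
  then have DA: "A * of_rat D = - of_rat P - of_rat Q * B"
    by (simp add: eq_neg_iff_add_eq_0 algebra_simps)
  have "D = 0"
  proof (rule ccontr)
    assume "D \<noteq> 0"
    then have "A = (- of_rat P - of_rat Q * B) / of_rat D"
      using DA by (simp add: nonzero_eq_divide_eq)
    also have "\<dots> = of_rat (- P / D) + of_rat (- Q / D) * B"
      using \<open>D \<noteq> 0\<close> by (simp add: of_rat_divide of_rat_minus field_simps)
    finally show False
      using A_not_in_QB by blast
  qed
  have "y = 0 \<and> w = 0"
  proof (cases "w = 0")
    case False
    then have "(y / w) ^ 2 = of_int b"
      using \<open>D = 0\<close> by (simp add: D_def power2_eq_square field_simps)
    then show ?thesis
      using squarefree_not_rat_square[OF squarefree_b b_neq_1] by blast
  qed (use \<open>D = 0\<close> in \<open>simp add: D_def\<close>)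
  moreover have "of_rat x + of_rat u * B = 0"
    using elt calculation by (simp add: elt_def)
  ultimately show "x = 0 \<and> y = 0 \<and> u = 0 \<and> w = 0"
    using rat_plus_rat_B_eq_0 by blast
qed (simp add: elt_def)

lemma elt_eq_iff: "elt x y u w = elt x' y' u' w' \<longleftrightarrow> x = x' \<and> y = y' \<and> u = u' \<and> w = w'"
proof -
  have "elt x y u w - elt x' y' u' w' = elt (x - x') (y - y') (u - u') (w - w')"
    by (simp add: elt_def of_rat_diff algebra_simps)
  then show ?thesis
    using elt_eq_0_iff[of "x - x'" "y - y'" "u - u'" "w - w'"] by auto
qed

section \<open>Conjugations\<close>

text \<open>It is defined through the coordinates, so it
  is only meaningful on \<open>K\<close>, and it is an automorphism of \<open>K\<close> only for \<open>e1, e2 \<in> {1, -1}\<close>.\<close>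
definition \<sigma> :: "int \<Rightarrow> int \<Rightarrow> complex \<Rightarrow> complex" where
  "\<sigma> e1 e2 z = (THE c. \<exists>x y u w. z = elt x y u w \<and>
      c = elt x (of_int e1 * y) (of_int e2 * u) (of_int (e1 * e2) * w))"

lemma \<sigma>_elt [simp]:
  "\<sigma> e1 e2 (elt x y u w) = elt x (of_int e1 * y) (of_int e2 * u) (of_int (e1 * e2) * w)"
  unfolding \<sigma>_def by (rule the_equality) (auto simp: elt_eq_iff)

lemma biquad_conj_is_iff:
  assumes "z \<in> K"
  shows "biquad_conj_is a b z e1 e2 c \<longleftrightarrow> c = \<sigma> e1 e2 z"
proof -
  have "biquad_conj_is a b z e1 e2 c \<longleftrightarrow> (\<exists>x y u w. z = elt x y u w \<and>
      c = elt x (of_int e1 * y) (of_int e2 * u) (of_int (e1 * e2) * w))"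
    unfolding biquad_conj_is_def elt_def A_def B_def by (simp add: of_rat_mult mult.assoc)
  also have "\<dots> \<longleftrightarrow> c = \<sigma> e1 e2 z"
    using assms by (auto elim!: K_cases simp: elt_eq_iff)
  finally show ?thesis .
qed

lemma K_add: "z \<in> K \<Longrightarrow> z' \<in> K \<Longrightarrow> z + z' \<in> K"
  by (auto elim!: K_cases simp: elt_add)

lemma K_mult: "z \<in> K \<Longrightarrow> z' \<in> K \<Longrightarrow> z * z' \<in> K"
  by (auto elim!: K_cases simp: elt_mult)

lemma K_of_rat: "of_rat q \<in> K"
  by (simp add: of_rat_eq_elt)

lemma \<sigma>_in_K: "z \<in> K \<Longrightarrow> \<sigma> e1 e2 z \<in> K"
  by (auto elim!: K_cases)

lemma \<sigma>_add: "z \<in> K \<Longrightarrow> z' \<in> K \<Longrightarrow> \<sigma> e1 e2 (z + z') = \<sigma> e1 e2 z + \<sigma> e1 e2 z'"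
  by (auto elim!: K_cases simp: elt_add elt_eq_iff algebra_simps)

lemma \<sigma>_of_rat: "\<sigma> e1 e2 (of_rat q) = of_rat q"
  by (simp add: of_rat_eq_elt)

lemma \<sigma>_mult:
  assumes "z \<in> K" "z' \<in> K" "e1 \<in> {1, -1}" "e2 \<in> {1, -1}"
  shows "\<sigma> e1 e2 (z * z') = \<sigma> e1 e2 z * \<sigma> e1 e2 z'"
  using assms by (auto elim!: K_cases simp: elt_mult elt_eq_iff algebra_simps)

lemma \<sigma>_id: "z \<in> K \<Longrightarrow> \<sigma> 1 1 z = z"
  by (auto elim!: K_cases)

lemma \<sigma>_comp: "z \<in> K \<Longrightarrow> \<sigma> e1 e2 (\<sigma> f1 f2 z) = \<sigma> (e1 * f1) (e2 * f2) z"
  by (auto elim!: K_cases simp: elt_eq_iff algebra_simps)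

lemma \<sigma>_eq_0_iff:
  assumes "z \<in> K" "e1 \<in> {1, -1}" "e2 \<in> {1, -1}"
  shows "\<sigma> e1 e2 z = 0 \<longleftrightarrow> z = 0"
  using assms by (auto elim!: K_cases simp: elt_eq_0_iff)

lemma rat_if_\<sigma>_fixed:
  assumes "z \<in> K" "\<sigma> (-1) 1 z = z" "\<sigma> 1 (-1) z = z"
  obtains q where "z = of_rat q"
  using assms by (auto elim!: K_cases simp: elt_eq_iff of_rat_eq_elt)

lemma trace_rat:
  assumes "z \<in> K"
  obtains q where "z + \<sigma> (-1) 1 z + \<sigma> 1 (-1) z + \<sigma> (-1) (-1) z = of_rat q"
  using assms by (auto elim!: K_cases simp: elt_add of_rat_eq_elt)

text \<open>The product of the four conjugates of \<open>z \<noteq> 0\<close> is a nonzero rational number.\<close>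
lemma K_inverse:
  assumes "z \<in> K"
  shows "inverse z \<in> K"
proof (cases "z = 0")
  case False
  define c where "c = \<sigma> (-1) 1 z * \<sigma> 1 (-1) z * \<sigma> (-1) (-1) z"
  have c: "c \<in> K" "c \<noteq> 0"
    using assms False by (auto simp: c_def \<sigma>_in_K K_mult \<sigma>_eq_0_iff)
  have "\<sigma> e1 e2 (z * c) = z * c" if "e1 \<in> {1, -1}" "e2 \<in> {1, -1}" for e1 e2
    using that assms
    by (auto simp: c_def \<sigma>_mult \<sigma>_in_K K_mult \<sigma>_comp \<sigma>_id mult_ac)
  then obtain q where q: "z * c = of_rat q"
    using assms c by (metis K_mult insertCI rat_if_\<sigma>_fixed)
  have "inverse z = c * inverse (z * c)"
    using False c by (simp add: field_simps)
  also have "\<dots> = c * of_rat (inverse q)"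
    using q by (simp add: of_rat_inverse)
  finally have "inverse z = c * of_rat (inverse q)" .
  then show ?thesis
    using c by (simp add: K_mult K_of_rat)
qed (use K_of_rat[of 0] in simp)

lemma \<sigma>_inverse:
  assumes "z \<in> K" "e1 \<in> {1, -1}" "e2 \<in> {1, -1}"
  shows "\<sigma> e1 e2 (inverse z) = inverse (\<sigma> e1 e2 z)"
proof (cases "z = 0")
  case False
  then have "\<sigma> e1 e2 z * \<sigma> e1 e2 (inverse z) = 1"
    using assms K_inverse \<sigma>_of_rat[of e1 e2 1] by (simp flip: \<sigma>_mult)
  then show ?thesis
    by (simp add: inverse_unique)
qed (use \<sigma>_of_rat[of e1 e2 0] in simp)

lemma \<sigma>_power:
  assumes "z \<in> K" "e1 \<in> {1, -1}" "e2 \<in> {1, -1}"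
  shows "\<sigma> e1 e2 (z ^ n) = \<sigma> e1 e2 z ^ n"
proof (induction n)
  case 0
  then show ?case
    using \<sigma>_of_rat[of e1 e2 1] by simp
next
  case (Suc n)
  have "z ^ n \<in> K"
    using assms(1) K_of_rat[of 1] by (induction n) (auto intro: K_mult)
  with Suc show ?case
    using assms by (simp add: \<sigma>_mult)
qed

lemma \<sigma>_poly:
  assumes "z \<in> K" "e1 \<in> {1, -1}" "e2 \<in> {1, -1}" "\<forall>i. coeff p i \<in> \<int>"
  shows "poly p z \<in> K \<and> \<sigma> e1 e2 (poly p z) = poly p (\<sigma> e1 e2 z)"
  using assms(4)
proof (induction p)
  case 0
  then show ?case
    using K_of_rat[of 0] \<sigma>_of_rat[of e1 e2 0] by simp
next
  case (pCons c p)
  obtain k where "c = of_int k"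
    using pCons.prems by (metis coeff_pCons_0 Ints_cases)
  then have "c \<in> K" "\<sigma> e1 e2 c = c"
    using K_of_rat[of "of_int k"] \<sigma>_of_rat[of e1 e2 "of_int k"] by simp_all
  moreover have "\<forall>i. coeff p i \<in> \<int>"
    using pCons.prems by (metis coeff_pCons_Suc)
  then have "poly p z \<in> K" "\<sigma> e1 e2 (poly p z) = poly p (\<sigma> e1 e2 z)"
    using pCons.IH by simp_all
  ultimately show ?case
    using assms by (simp add: K_add K_mult \<sigma>_add \<sigma>_mult)
qed

lemma algebraic_int_\<sigma>:
  assumes "z \<in> K" "algebraic_int z" "e1 \<in> {1, -1}" "e2 \<in> {1, -1}"
  shows "algebraic_int (\<sigma> e1 e2 z)"
proof -
  obtain p where p: "lead_coeff p = 1" "\<forall>i. coeff p i \<in> \<int>" "poly p z = 0"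
    using assms(2) by (auto elim: algebraic_int.cases)
  then have "poly p (\<sigma> e1 e2 z) = 0"
    using \<sigma>_poly[OF assms(1,3,4) p(2)] \<sigma>_of_rat[of e1 e2 0] by simp
  with p show ?thesis
    by (intro algebraic_int.intros)
qed

lemma unit_group_K_iff:
  "z \<in> unit_group K \<longleftrightarrow> z \<in> K \<and> z \<noteq> 0 \<and> algebraic_int z \<and> algebraic_int (inverse z)"
  by (auto simp: unit_group_def ring_of_integers_def K_inverse)

lemma unit_group_K_mult: "z \<in> unit_group K \<Longrightarrow> z' \<in> unit_group K \<Longrightarrow> z * z' \<in> unit_group K"
  by (auto simp: unit_group_K_iff K_mult algebraic_int_times)

lemma \<sigma>_unit_group:
  assumes "z \<in> unit_group K" "e1 \<in> {1, -1}" "e2 \<in> {1, -1}"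
  shows "\<sigma> e1 e2 z \<in> unit_group K"
  using assms K_inverse
  by (auto simp: unit_group_K_iff \<sigma>_in_K \<sigma>_eq_0_iff algebraic_int_\<sigma> simp flip: \<sigma>_inverse)

lemma unit_group_K_of_square:
  assumes "v \<in> K" "v ^ 2 \<in> unit_group K"
  shows "v \<in> unit_group K"
  using assms algebraic_int_of_square[of v] algebraic_int_of_square[of "inverse v"]
  by (auto simp: unit_group_K_iff power_inverse)

lemma unit_norm_pm1:
  assumes "z \<in> unit_group K" "e1 \<in> {1, -1}" "e2 \<in> {1, -1}" "z * \<sigma> e1 e2 z = of_rat n"
  shows "n = 1 \<or> n = -1"
proof (rule rat_algebraic_int_unit)
  have "z * \<sigma> e1 e2 z \<in> unit_group K"
    using assms(1-3) by (simp add: \<sigma>_unit_group unit_group_K_mult)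
  then show "algebraic_int (of_rat n :: complex)" "algebraic_int (of_rat (inverse n) :: complex)"
    "n \<noteq> 0"
    using assms(4) by (auto simp: unit_group_K_iff of_rat_inverse)
qed

section \<open>The quadratic subfields\<close>

lemma A_in_K: "A \<in> K" and B_in_K: "B \<in> K" and AB_in_K: "A * B \<in> K"
  using elt_in_K[of 0 1 0 0] elt_in_K[of 0 0 1 0] elt_in_K[of 0 0 0 1] by (simp_all add: elt_def)

lemma A_square_rat: "A ^ 2 = of_rat (of_int a)"
  and B_square_rat: "B ^ 2 = of_rat (of_int b)"
  and AB_square_rat: "(A * B) ^ 2 = of_rat (of_int (a * b))"
  using A_square B_square by (simp_all add: power2_eq_square algebra_simps of_rat_mult)

lemma quad_field_A: "quad_field A = {elt x y 0 0 | x y. True}"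
  and quad_field_B: "quad_field B = {elt x 0 u 0 | x u. True}"
  and quad_field_AB: "quad_field (A * B) = {elt x 0 0 w | x w. True}"
  by (auto simp: quad_field_def elt_def)

lemma quad_field_A_fixed: "quad_field A = {z \<in> K. \<sigma> 1 (-1) z = z}"
  and quad_field_B_fixed: "quad_field B = {z \<in> K. \<sigma> (-1) 1 z = z}"
  and quad_field_AB_fixed: "quad_field (A * B) = {z \<in> K. \<sigma> (-1) (-1) z = z}"
  unfolding quad_field_A quad_field_B quad_field_AB by (auto elim!: K_cases simp: elt_eq_iff)

lemma unit_group_fixed_field:
  assumes "F = {z \<in> K. \<sigma> e1 e2 z = z}" "e1 \<in> {1, -1}" "e2 \<in> {1, -1}"
  shows "unit_group F = {z \<in> unit_group K. \<sigma> e1 e2 z = z}"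
  using assms K_inverse \<sigma>_inverse[of _ e1 e2]
  by (auto simp: unit_group_def ring_of_integers_def)

lemma \<sigma>_quad_field:
  assumes "s \<in> K" "\<sigma> e1 e2 s = - s" "e1 \<in> {1, -1}" "e2 \<in> {1, -1}"
  shows "\<sigma> e1 e2 (of_rat x + of_rat y * s) = of_rat x - of_rat y * s"
  using assms by (simp add: \<sigma>_add \<sigma>_mult \<sigma>_of_rat K_mult K_of_rat)

lemma quad_norm_is_iff:
  assumes "s \<in> K" "\<sigma> e1 e2 s = - s" "e1 \<in> {1, -1}" "e2 \<in> {1, -1}" "z \<in> quad_field s"
  shows "quad_norm_is s z m \<longleftrightarrow> m = z * \<sigma> e1 e2 z"
proof -
  have "(of_rat x + of_rat y * s) * \<sigma> e1 e2 (of_rat x + of_rat y * s) = (of_rat x)\<^sup>2 - (of_rat y)\<^sup>2 * s\<^sup>2"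
    for x y
    unfolding \<sigma>_quad_field[OF assms(1-4)] by (simp add: power2_eq_square algebra_simps)
  then show ?thesis
    using assms(5) by (auto simp: quad_norm_is_def quad_field_def)
qed

lemma unit_quad_norm_pm1:
  assumes "s \<in> K" "\<sigma> e1 e2 s = - s" "e1 \<in> {1, -1}" "e2 \<in> {1, -1}" "s ^ 2 = of_rat d"
    and "u \<in> unit_group (quad_field s)"
  obtains n where "n = 1 \<or> n = -1" "quad_norm_is s u (of_rat n)"
proof -
  have sub: "quad_field s \<subseteq> K"
    using assms(1) by (auto simp: quad_field_def K_add K_mult K_of_rat)
  obtain x y where "u = of_rat x + of_rat y * s"
    using assms(6) by (auto simp: unit_group_def ring_of_integers_def quad_field_def)
  then have norm: "quad_norm_is s u (of_rat (x ^ 2 - y ^ 2 * d))"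
    using assms(5) by (auto simp: quad_norm_is_def of_rat_diff of_rat_mult of_rat_power)
  moreover have "u \<in> unit_group K" "u \<in> quad_field s"
    using assms(6) unit_group_mono[OF sub] by (auto simp: unit_group_def ring_of_integers_def)
  ultimately have "x ^ 2 - y ^ 2 * d = 1 \<or> x ^ 2 - y ^ 2 * d = -1"
    using assms(1-4) by (intro unit_norm_pm1[of u e1 e2]) (simp_all add: quad_norm_is_iff)
  with norm show ?thesis
    using that by blast
qed

lemma \<sigma>_A: "\<sigma> e1 e2 A = of_int e1 * A"
  and \<sigma>_B: "\<sigma> e1 e2 B = of_int e2 * B"
  and \<sigma>_AB: "\<sigma> e1 e2 (A * B) = of_int (e1 * e2) * (A * B)"
  using \<sigma>_elt[of e1 e2 0 1 0 0] \<sigma>_elt[of e1 e2 0 0 1 0] \<sigma>_elt[of e1 e2 0 0 0 1]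
  by (simp_all add: elt_def of_rat_mult)

lemma unit_group_quad_field_A: "unit_group (quad_field A) = {z \<in> unit_group K. \<sigma> 1 (-1) z = z}"
  and unit_group_quad_field_B: "unit_group (quad_field B) = {z \<in> unit_group K. \<sigma> (-1) 1 z = z}"
  and unit_group_quad_field_AB:
    "unit_group (quad_field (A * B)) = {z \<in> unit_group K. \<sigma> (-1) (-1) z = z}"
  by (simp_all add: unit_group_fixed_field quad_field_A_fixed quad_field_B_fixed quad_field_AB_fixed)

lemma quad_norm_is_A_iff: "z \<in> quad_field A \<Longrightarrow> quad_norm_is A z m \<longleftrightarrow> m = z * \<sigma> (-1) 1 z"
  and quad_norm_is_B_iff: "z \<in> quad_field B \<Longrightarrow> quad_norm_is B z m \<longleftrightarrow> m = z * \<sigma> 1 (-1) z"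
  and quad_norm_is_AB_iff:
    "z \<in> quad_field (A * B) \<Longrightarrow> quad_norm_is (A * B) z m \<longleftrightarrow> m = z * \<sigma> 1 (-1) z"
  by (simp_all add: quad_norm_is_iff A_in_K B_in_K AB_in_K \<sigma>_A \<sigma>_B \<sigma>_AB)

lemma unit_norm_pm1_A:
  assumes "u \<in> unit_group (quad_field A)"
  obtains n where "n = 1 \<or> n = -1" "quad_norm_is A u (of_rat n)"
  using unit_quad_norm_pm1[OF A_in_K _ _ _ A_square_rat assms, of "-1" 1] by (auto simp: \<sigma>_A)

lemma unit_norm_pm1_B:
  assumes "u \<in> unit_group (quad_field B)"
  obtains n where "n = 1 \<or> n = -1" "quad_norm_is B u (of_rat n)"
  using unit_quad_norm_pm1[OF B_in_K _ _ _ B_square_rat assms, of 1 "-1"] by (auto simp: \<sigma>_B)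

lemma unit_norm_pm1_AB:
  assumes "u \<in> unit_group (quad_field (A * B))"
  obtains n where "n = 1 \<or> n = -1" "quad_norm_is (A * B) u (of_rat n)"
  using unit_quad_norm_pm1[OF AB_in_K _ _ _ AB_square_rat assms, of 1 "-1"] by (auto simp: \<sigma>_AB)

lemma of_rat_pm1_in_unit_group: "n = 1 \<or> n = -1 \<Longrightarrow> of_rat n \<in> unit_group K"
  by (auto simp: unit_group_K_iff K_of_rat)

section \<open>Squares up to rational factors\<close>

definition equal_norm_product :: "complex \<Rightarrow> rat \<Rightarrow> bool" where
  "equal_norm_product \<eta> n \<longleftrightarrow> (\<exists>u1 u2 u3. \<eta> = u1 * u2 * u3
      \<and> u1 \<in> unit_group (quad_field A) \<and> u2 \<in> unit_group (quad_field B)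
      \<and> u3 \<in> unit_group (quad_field (A * B))
      \<and> quad_norm_is A u1 (of_rat n) \<and> quad_norm_is B u2 (of_rat n)
      \<and> quad_norm_is (A * B) u3 (of_rat n))"

lemma relative_norm_unit:
  assumes \<eta>: "\<eta> \<in> unit_group K" and \<rho>: "\<rho> \<in> K" "\<rho>\<^sup>2 = of_rat r * \<eta>" and "r \<noteq> 0"
    and e: "e1 \<in> {1, -1}" "e2 \<in> {1, -1}"
  shows "\<rho> * \<sigma> e1 e2 \<rho> * of_rat (inverse r) \<in> unit_group K" (is "?v \<in> _")
    and "\<sigma> e1 e2 (\<rho> * \<sigma> e1 e2 \<rho> * of_rat (inverse r)) = \<rho> * \<sigma> e1 e2 \<rho> * of_rat (inverse r)"
proof -
  have "(\<sigma> e1 e2 \<rho>)\<^sup>2 = of_rat r * \<sigma> e1 e2 \<eta>"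
    using \<rho> \<eta> e by (simp add: \<sigma>_mult K_of_rat \<sigma>_of_rat unit_group_K_iff flip: \<sigma>_power)
  then have "?v\<^sup>2 = (of_rat (inverse r) * of_rat r)\<^sup>2 * (\<eta> * \<sigma> e1 e2 \<eta>)"
    using \<rho>(2) by (simp add: power_mult_distrib power2_eq_square mult_ac)
  also have "\<dots> = \<eta> * \<sigma> e1 e2 \<eta>"
    using \<open>r \<noteq> 0\<close> by (simp flip: of_rat_mult)
  finally have "?v\<^sup>2 \<in> unit_group K"
    using \<eta> e by (simp add: \<sigma>_unit_group unit_group_K_mult)
  moreover have "?v \<in> K"
    using \<rho>(1) by (simp add: K_mult \<sigma>_in_K K_of_rat)
  ultimately show "?v \<in> unit_group K"
    by (simp add: unit_group_K_of_square)
  show "\<sigma> e1 e2 ?v = ?v"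
    using \<rho>(1) e by (auto simp: \<sigma>_mult \<sigma>_in_K K_mult K_of_rat \<sigma>_of_rat \<sigma>_comp \<sigma>_id)
qed

text \<open>The witnesses are the relative norms \<open>\<rho> \<sigma>(\<rho>) / r\<close>; their common norm is \<open>N(\<rho>) / r\<^sup>2\<close>.\<close>
lemma relative_norms:
  assumes \<eta>: "\<eta> \<in> unit_group K" and \<rho>: "\<rho> \<in> K" "\<rho>\<^sup>2 = of_rat r * \<eta>" and r: "r \<noteq> 0"
  obtains v1 v2 v3 P where "v1 \<in> unit_group (quad_field A)" "v2 \<in> unit_group (quad_field B)"
    "v3 \<in> unit_group (quad_field (A * B))"
    "quad_norm_is A v1 P" "quad_norm_is B v2 P" "quad_norm_is (A * B) v3 P" "v1 * v2 * v3 = \<eta> * P"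
proof -
  define R where "R = (of_rat (inverse r) :: complex)"
  define v where "v e1 e2 = \<rho> * \<sigma> e1 e2 \<rho> * R" for e1 e2
  define P where "P = \<rho> * \<sigma> 1 (-1) \<rho> * \<sigma> (-1) 1 \<rho> * \<sigma> (-1) (-1) \<rho> * R * R"
  have norms: "v 1 (-1) * \<sigma> (-1) 1 (v 1 (-1)) = P" "v (-1) 1 * \<sigma> 1 (-1) (v (-1) 1) = P"
    "v (-1) (-1) * \<sigma> 1 (-1) (v (-1) (-1)) = P"
    using \<rho>(1)
    by (simp_all add: v_def P_def R_def \<sigma>_mult \<sigma>_in_K K_mult K_of_rat \<sigma>_of_rat \<sigma>_comp \<sigma>_id mult_ac)
  have "v 1 (-1) * v (-1) 1 * v (-1) (-1) = (\<rho>\<^sup>2 * R) * P"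
    by (simp add: v_def P_def power2_eq_square mult_ac)
  also have "\<rho>\<^sup>2 * R = \<eta>"
    using \<rho>(2) r by (simp add: R_def mult_ac flip: of_rat_mult)
  finally have "v 1 (-1) * v (-1) 1 * v (-1) (-1) = \<eta> * P" .
  moreover have units: "v 1 (-1) \<in> unit_group (quad_field A)" "v (-1) 1 \<in> unit_group (quad_field B)"
    "v (-1) (-1) \<in> unit_group (quad_field (A * B))"
    using relative_norm_unit[OF assms] unfolding v_def R_def
    by (simp_all add: unit_group_quad_field_A unit_group_quad_field_B unit_group_quad_field_AB)
  moreover have "quad_norm_is A (v 1 (-1)) P" "quad_norm_is B (v (-1) 1) P"
    "quad_norm_is (A * B) (v (-1) (-1)) P"
    using units[THEN subsetD[OF unit_group_subset]] norms
    by (simp_all add: quad_norm_is_A_iff quad_norm_is_B_iff quad_norm_is_AB_iff)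
  ultimately show ?thesis
    using that by blast
qed

lemma equal_norm_product_if_rat_square:
  assumes \<eta>: "\<eta> \<in> unit_group K" and \<rho>: "\<rho> \<in> K" "\<rho>\<^sup>2 = of_rat r * \<eta>" and "r \<noteq> 0"
  obtains n where "n = 1 \<or> n = -1" "equal_norm_product \<eta> n"
proof -
  obtain v1 v2 v3 P where v: "v1 \<in> unit_group (quad_field A)" "v2 \<in> unit_group (quad_field B)"
    "v3 \<in> unit_group (quad_field (A * B))"
    "quad_norm_is A v1 P" "quad_norm_is B v2 P" "quad_norm_is (A * B) v3 P" "v1 * v2 * v3 = \<eta> * P"
    by (rule relative_norms[OF assms])
  obtain n where n: "n = 1 \<or> n = -1" "quad_norm_is A v1 (of_rat n)"
    by (rule unit_norm_pm1_A[OF v(1)])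
  have v1: "v1 \<in> unit_group K" "\<sigma> 1 (-1) v1 = v1" "v1 \<in> quad_field A"
    using v(1) unit_group_subset[of "quad_field A"] by (auto simp: unit_group_quad_field_A)
  have P: "P = of_rat n"
    using v(4) n(2) v1(3) by (simp add: quad_norm_is_A_iff)
  have nn: "of_rat n * (of_rat n :: complex) = 1"
    using n(1) by auto
  define u1 where "u1 = of_rat n * v1"
  have "u1 \<in> unit_group K"
    unfolding u1_def using of_rat_pm1_in_unit_group[OF n(1)] v1(1) by (rule unit_group_K_mult)
  moreover have "\<sigma> 1 (-1) u1 = u1"
    using v1 by (simp add: u1_def \<sigma>_mult K_of_rat \<sigma>_of_rat unit_group_K_iff)
  ultimately have "u1 \<in> unit_group (quad_field A)"
    by (simp add: unit_group_quad_field_A)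
  moreover have "quad_norm_is A u1 (of_rat n)"
  proof -
    have "u1 * \<sigma> (-1) 1 u1 = (of_rat n * of_rat n) * (v1 * \<sigma> (-1) 1 v1)"
      using v1 by (simp add: u1_def \<sigma>_mult K_of_rat \<sigma>_of_rat unit_group_K_iff mult_ac)
    also have "\<dots> = of_rat n"
      using v(4) v1(3) nn P by (simp add: quad_norm_is_A_iff)
    finally show ?thesis
      using \<open>u1 \<in> unit_group (quad_field A)\<close> unit_group_subset
      by (subst quad_norm_is_A_iff) auto
  qed
  moreover have "\<eta> = u1 * v2 * v3"
  proof -
    have "u1 * v2 * v3 = \<eta> * (of_rat n * of_rat n)"
      using v(7) P by (simp add: u1_def mult_ac)
    then show ?thesis
      using nn by simp
  qed
  ultimately show ?thesis
    using that n(1) v(2,3,5,6) P unfolding equal_norm_product_def by blast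
qed

text \<open>The \<open>v\<^sub>i\<close> are the conjugates of the \<open>u\<^sub>i\<close> over \<open>\<rat>\<close>, and the last sum is the trace of \<open>\<eta>\<close>.\<close>
lemma equal_norm_product_conjugates:
  assumes "equal_norm_product \<eta> n"
  obtains u1 u2 u3 v1 v2 v3 t1 t2 t3 q where "\<eta> = u1 * u2 * u3" "\<eta> \<noteq> 0"
    "u1 \<in> ring_of_integers K" "u2 \<in> ring_of_integers K" "u3 \<in> ring_of_integers K"
    "u1 * v1 = of_rat n" "u2 * v2 = of_rat n" "u3 * v3 = of_rat n"
    "u1 + v1 = of_rat t1" "u2 + v2 = of_rat t2" "u3 + v3 = of_rat t3"
    "\<eta> + v1 * u2 * v3 + u1 * v2 * v3 + v1 * v2 * u3 = of_rat q"
proof -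
  obtain u1 u2 u3 where \<eta>: "\<eta> = u1 * u2 * u3" and units: "u1 \<in> unit_group (quad_field A)"
    "u2 \<in> unit_group (quad_field B)" "u3 \<in> unit_group (quad_field (A * B))"
    and norms: "quad_norm_is A u1 (of_rat n)" "quad_norm_is B u2 (of_rat n)"
      "quad_norm_is (A * B) u3 (of_rat n)"
    using assms unfolding equal_norm_product_def by blast
  obtain x1 y1 where u1: "u1 = elt x1 y1 0 0" "n = x1\<^sup>2 - y1\<^sup>2 * of_int a"
    using quad_norm_is_rat[OF norms(1) A_square_rat] by (auto simp: elt_def)
  obtain x2 y2 where u2: "u2 = elt x2 0 y2 0" "n = x2\<^sup>2 - y2\<^sup>2 * of_int b"
    using quad_norm_is_rat[OF norms(2) B_square_rat] by (auto simp: elt_def)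
  obtain x3 y3 where u3: "u3 = elt x3 0 0 y3" "n = x3\<^sup>2 - y3\<^sup>2 * of_int (a * b)"
    using quad_norm_is_rat[OF norms(3) AB_square_rat] by (auto simp: elt_def)
  define v1 v2 v3 where "v1 = elt x1 (- y1) 0 0" "v2 = elt x2 0 (- y2) 0" "v3 = elt x3 0 0 (- y3)"
  have "u1 * v1 = of_rat n" "u2 * v2 = of_rat n" "u3 * v3 = of_rat n"
    using u1 u2 u3
    by (simp_all add: v1_v2_v3_def elt_mult of_rat_eq_elt elt_eq_iff power2_eq_square mult_ac)
  moreover have "u1 + v1 = of_rat (2 * x1)" "u2 + v2 = of_rat (2 * x2)" "u3 + v3 = of_rat (2 * x3)"
    by (simp_all add: u1 u2 u3 v1_v2_v3_def elt_add of_rat_eq_elt)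
  moreover have "\<sigma> (-1) 1 \<eta> = v1 * u2 * v3" "\<sigma> 1 (-1) \<eta> = u1 * v2 * v3"
    "\<sigma> (-1) (-1) \<eta> = v1 * v2 * u3"
    by (simp_all add: \<eta> u1 u2 u3 v1_v2_v3_def \<sigma>_mult K_mult)
  then obtain q where "\<eta> + v1 * u2 * v3 + u1 * v2 * v3 + v1 * v2 * u3 = of_rat q"
    by (metis trace_rat \<eta> u1 u2 u3 K_mult elt_in_K)
  moreover have "\<eta> \<noteq> 0"
    using units by (simp add: \<eta> unit_group_def)
  moreover have "u1 \<in> ring_of_integers K" "u2 \<in> ring_of_integers K" "u3 \<in> ring_of_integers K"
    using units by (simp_all add: u1 u2 u3 unit_group_def ring_of_integers_def)
  ultimately show ?thesis
    using that \<eta> by blast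
qed

text \<open>The witness is \<open>\<rho> = \<eta> + \<epsilon>\<^sub>1 u\<^sub>1 + \<epsilon>\<^sub>2 u\<^sub>2 + n \<epsilon>\<^sub>1 \<epsilon>\<^sub>2 u\<^sub>3\<close> for one of the four choices of signs.\<close>
lemma rat_times_square_if_equal_norm_product:
  assumes "equal_norm_product \<eta> n" "n = 1 \<or> n = -1"
  shows "rat_times_square K \<eta>"
proof -
  obtain u1 u2 u3 v1 v2 v3 t1 t2 t3 q where \<eta>: "\<eta> = u1 * u2 * u3" "\<eta> \<noteq> 0"
    and integral: "u1 \<in> ring_of_integers K" "u2 \<in> ring_of_integers K" "u3 \<in> ring_of_integers K"
    and uv: "u1 * v1 = of_rat n" "u2 * v2 = of_rat n" "u3 * v3 = of_rat n"
    and tr: "u1 + v1 = of_rat t1" "u2 + v2 = of_rat t2" "u3 + v3 = of_rat t3"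
    and q: "\<eta> + v1 * u2 * v3 + u1 * v2 * v3 + v1 * v2 * u3 = of_rat q"
    by (rule equal_norm_product_conjugates[OF assms(1)])
  define \<rho> where "\<rho> e1 e2 = \<eta> + of_rat e1 * u1 + of_rat e2 * u2 + of_rat n * of_rat e1 * of_rat e2 * u3"
    for e1 e2 :: rat
  have square: "(\<rho> e1 e2)\<^sup>2 = of_rat (q + 2 * (e1 * t1 + e2 * t2 + n * e1 * e2 * t3)) * \<eta>"
    if "e1 \<in> {1, -1}" "e2 \<in> {1, -1}" for e1 e2
  proof -
    have "(of_rat n :: complex) * of_rat n = 1" "(of_rat e1 :: complex) * of_rat e1 = 1"
      "(of_rat e2 :: complex) * of_rat e2 = 1"
      using assms(2) that by auto
    from square_identity[OF uv this] show ?thesis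
      unfolding \<rho>_def \<eta>(1)[symmetric] q tr
      by (simp add: of_rat_add of_rat_mult algebra_simps)
  qed
  have \<rho>_integral: "\<rho> e1 e2 \<in> ring_of_integers K" if "e1 \<in> {1, -1}" "e2 \<in> {1, -1}" for e1 e2
  proof -
    have "algebraic_int (of_rat e1 :: complex)" "algebraic_int (of_rat e2 :: complex)"
      "algebraic_int (of_rat n :: complex)"
      using that assms(2) by auto
    then show ?thesis
      using integral unfolding ring_of_integers_def \<rho>_def \<eta>(1)
      by (simp add: K_add K_mult K_of_rat algebraic_int_plus algebraic_int_times)
  qed
  have "\<exists>e1 \<in> {1, -1}. \<exists>e2 \<in> {1, -1}. \<rho> e1 e2 \<noteq> 0"
  proof (rule ccontr)
    assume "\<not> ?thesis"
    then have "\<rho> 1 1 + \<rho> 1 (-1) + \<rho> (-1) 1 + \<rho> (-1) (-1) = 0"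
      by simp
    moreover have "\<rho> 1 1 + \<rho> 1 (-1) + \<rho> (-1) 1 + \<rho> (-1) (-1) = 4 * \<eta>"
      by (simp add: \<rho>_def of_rat_minus algebra_simps)
    ultimately show False
      using \<eta>(2) by simp
  qed
  then obtain e1 e2 where e: "e1 \<in> {1, -1}" "e2 \<in> {1, -1}" "\<rho> e1 e2 \<noteq> 0"
    by blast
  define r where "r = q + 2 * (e1 * t1 + e2 * t2 + n * e1 * e2 * t3)"
  have "r \<noteq> 0" "\<eta> = (\<rho> e1 e2)\<^sup>2 / of_rat r"
    using square[OF e(1,2)] e(3) by (auto simp: r_def)
  then show ?thesis
    unfolding rat_times_square_def using \<rho>_integral[OF e(1,2)] by blast
qed

lemma rat_times_square_iff_equal_norm_product:
  assumes "\<eta> \<in> unit_group K"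
  shows "rat_times_square K \<eta> \<longleftrightarrow> (\<exists>n. (n = 1 \<or> n = -1) \<and> equal_norm_product \<eta> n)"
proof
  assume "rat_times_square K \<eta>"
  then obtain \<rho> r where "\<rho> \<in> K" "r \<noteq> 0" "\<eta> = \<rho>\<^sup>2 / of_rat r"
    by (auto simp: rat_times_square_def ring_of_integers_def)
  then have "\<rho>\<^sup>2 = of_rat r * \<eta>"
    by simp
  then show "\<exists>n. (n = 1 \<or> n = -1) \<and> equal_norm_product \<eta> n"
    using equal_norm_product_if_rat_square[OF assms \<open>\<rho> \<in> K\<close> _ \<open>r \<noteq> 0\<close>] by metis
qed (auto intro: rat_times_square_if_equal_norm_product)

section \<open>Comparison with \<open>O\<^sub>K\<^sup>*\<close>\<close>

lemma totally_signed_if_rat_times_square: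
  assumes "K \<subseteq> \<real>" "\<eta> \<in> unit_group K" "rat_times_square K \<eta>"
  shows "totally_positive a b \<eta> \<or> totally_negative a b \<eta>"
proof -
  obtain \<rho> r where \<rho>: "\<rho> \<in> K" "r \<noteq> 0" "\<eta> = \<rho>\<^sup>2 / of_rat r"
    using assms(3) by (auto simp: rat_times_square_def ring_of_integers_def)
  have \<eta>: "\<eta> \<in> K" "\<eta> \<noteq> 0"
    using assms(2) by (simp_all add: unit_group_K_iff)
  have \<rho>2: "\<rho>\<^sup>2 = of_rat r * \<eta>"
    using \<rho>(2,3) by simp
  have sign: "\<sigma> e1 e2 \<eta> \<in> \<real> \<and> (0 < r \<longrightarrow> 0 < Re (\<sigma> e1 e2 \<eta>)) \<and> (r < 0 \<longrightarrow> Re (\<sigma> e1 e2 \<eta>) < 0)"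
    if e: "e1 \<in> {1, -1}" "e2 \<in> {1, -1}" for e1 e2
  proof (rule real_sign_of_square)
    show "\<sigma> e1 e2 \<rho> \<in> \<real>"
      using assms(1) \<rho>(1) \<sigma>_in_K by blast
    show "\<sigma> e1 e2 \<rho> \<noteq> 0"
      using \<rho> \<eta>(2) e by (simp add: \<sigma>_eq_0_iff)
    show "(\<sigma> e1 e2 \<rho>)\<^sup>2 = of_rat r * \<sigma> e1 e2 \<eta>"
      using \<rho>(1) \<rho>2 \<eta>(1) e by (simp add: \<sigma>_mult \<sigma>_of_rat K_of_rat flip: \<sigma>_power)
  qed
  have "0 < r \<or> r < 0"
    using \<rho>(2) by linarith
  then show ?thesis
    unfolding totally_positive_def totally_negative_def biquad_conj_is_iff[OF \<eta>(1)]
    using sign by blast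
qed

lemma conj_times_pos_if_totally_signed:
  assumes "\<eta> \<in> K" "totally_positive a b \<eta> \<or> totally_negative a b \<eta>"
    and "e1 \<in> {1, -1}" "e2 \<in> {1, -1}"
  shows "\<sigma> e1 e2 \<eta> \<in> \<real> \<and> \<eta> \<in> \<real> \<and> 0 < Re (\<sigma> e1 e2 \<eta>) * Re \<eta>"
proof -
  have "(\<forall>e1 \<in> {1, -1}. \<forall>e2 \<in> {1, -1}. \<sigma> e1 e2 \<eta> \<in> \<real> \<and> 0 < Re (\<sigma> e1 e2 \<eta>))
      \<or> (\<forall>e1 \<in> {1, -1}. \<forall>e2 \<in> {1, -1}. \<sigma> e1 e2 \<eta> \<in> \<real> \<and> Re (\<sigma> e1 e2 \<eta>) < 0)"
    using assms(2) unfolding totally_positive_def totally_negative_def biquad_conj_is_iff[OF assms(1)]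
    by blast
  then show ?thesis
    using assms(3,4) \<sigma>_id[OF assms(1)] by (metis insertI1 mult_neg_neg mult_pos_pos)
qed

lemma norm_signs_if_totally_signed:
  assumes "K \<subseteq> \<real>" "totally_positive a b \<eta> \<or> totally_negative a b \<eta>" "\<eta> = u1 * u2 * u3"
    and units: "u1 \<in> unit_group (quad_field A)" "u2 \<in> unit_group (quad_field B)"
      "u3 \<in> unit_group (quad_field (A * B))"
    and norms: "quad_norm_is A u1 (of_rat n1)" "quad_norm_is B u2 (of_rat n2)"
      "quad_norm_is (A * B) u3 (of_rat n3)"
  shows "0 < n1 * n3" "0 < n2 * n3"
proof -
  have K: "u1 \<in> K" "u2 \<in> K" "u3 \<in> K" "u1 \<noteq> 0" "u2 \<noteq> 0"
    and fixed: "\<sigma> 1 (-1) u1 = u1" "\<sigma> (-1) 1 u2 = u2" "\<sigma> (-1) (-1) u3 = u3"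
    using units by (auto simp: unit_group_quad_field_A unit_group_quad_field_B
        unit_group_quad_field_AB unit_group_K_iff)
  have N: "u1 * \<sigma> (-1) 1 u1 = of_rat n1" "u2 * \<sigma> 1 (-1) u2 = of_rat n2"
    "u3 * \<sigma> 1 (-1) u3 = of_rat n3"
    using norms units[THEN subsetD[OF unit_group_subset]]
    by (simp_all add: quad_norm_is_A_iff quad_norm_is_B_iff quad_norm_is_AB_iff)
  have \<eta>K: "\<eta> \<in> K"
    using K by (simp add: assms(3) K_mult)
  note sign = conj_times_pos_if_totally_signed[OF \<eta>K assms(2)]
  have "\<sigma> (-1) 1 u3 = \<sigma> 1 (-1) u3"
    using \<sigma>_comp[OF K(3), of "-1" 1 "-1" "-1"] fixed(3) by simp
  then have "\<sigma> (-1) 1 \<eta> = \<sigma> (-1) 1 u1 * u2 * \<sigma> 1 (-1) u3"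
    using K fixed by (simp add: assms(3) \<sigma>_mult K_mult)
  then have "\<sigma> (-1) 1 \<eta> * \<eta> = (u1 * \<sigma> (-1) 1 u1) * (u3 * \<sigma> 1 (-1) u3) * u2\<^sup>2"
    by (simp add: assms(3) power2_eq_square mult_ac)
  then have "\<sigma> (-1) 1 \<eta> * \<eta> = of_rat (n1 * n3) * u2\<^sup>2"
    by (simp add: N of_rat_mult)
  then show "0 < n1 * n3"
    using sign[of "-1" 1] assms(1) K rat_pos_if_real_product_pos[of "\<sigma> (-1) 1 \<eta>" \<eta> "n1 * n3" u2]
    by auto
  have "\<sigma> 1 (-1) \<eta> = u1 * \<sigma> 1 (-1) u2 * \<sigma> 1 (-1) u3"
    using K fixed by (simp add: assms(3) \<sigma>_mult K_mult)
  then have "\<sigma> 1 (-1) \<eta> * \<eta> = (u2 * \<sigma> 1 (-1) u2) * (u3 * \<sigma> 1 (-1) u3) * u1\<^sup>2"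
    by (simp add: assms(3) power2_eq_square mult_ac)
  then have "\<sigma> 1 (-1) \<eta> * \<eta> = of_rat (n2 * n3) * u1\<^sup>2"
    by (simp add: N of_rat_mult)
  then show "0 < n2 * n3"
    using sign[of 1 "-1"] assms(1) K rat_pos_if_real_product_pos[of "\<sigma> 1 (-1) \<eta>" \<eta> "n2 * n3" u1]
    by auto
qed

lemma K_real_if_positive:
  assumes "0 < a" "0 < b"
  shows "K \<subseteq> \<real>"
proof
  fix z assume "z \<in> K"
  then obtain x y u w where z: "z = elt x y u w"
    by (rule K_cases)
  have "A \<in> \<real>" "B \<in> \<real>"
    using assms unfolding A_def B_def
    by (metis Reals_of_real of_real_of_int_eq of_real_sqrt of_int_0_le_iff less_imp_le)+
  moreover have "of_rat q \<in> (\<real> :: complex set)" for q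
    by (simp add: complex_of_rat_eq_of_real)
  ultimately show "z \<in> \<real>"
    unfolding z elt_def by (intro Reals_add Reals_mult) auto
qed

lemma OK_star_real:
  assumes "K \<subseteq> \<real>"
  shows "\<eta> \<in> OK_star a b \<longleftrightarrow> (totally_positive a b \<eta> \<or> totally_negative a b \<eta>) \<and>
    \<eta> \<in> set_prod3 (unit_group (quad_field A)) (unit_group (quad_field B)) (unit_group (quad_field (A * B)))"
  using assms unfolding OK_star_def A_def B_def Let_def by auto

lemma OK_star_nonreal:
  assumes "\<not> K \<subseteq> \<real>"
  shows "\<eta> \<in> OK_star a b \<longleftrightarrow> equal_norm_product \<eta> 1"
  using assms
  unfolding OK_star_def equal_norm_product_def set_prod3_def quad_norm_one_units_def A_def B_def Let_def
  by auto

lemma rat_times_square_iff_OK_star_real: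
  assumes "K \<subseteq> \<real>" "\<eta> \<in> unit_group K"
  shows "rat_times_square K \<eta> \<longleftrightarrow> \<eta> \<in> OK_star a b"
proof
  assume "rat_times_square K \<eta>"
  then obtain n where "equal_norm_product \<eta> n"
    using rat_times_square_iff_equal_norm_product[OF assms(2)] by blast
  then show "\<eta> \<in> OK_star a b"
    using totally_signed_if_rat_times_square[OF assms \<open>rat_times_square K \<eta>\<close>] assms(1)
    by (auto simp: OK_star_real equal_norm_product_def set_prod3_def)
next
  assume "\<eta> \<in> OK_star a b"
  then obtain u1 u2 u3 where signed: "totally_positive a b \<eta> \<or> totally_negative a b \<eta>"
    and \<eta>: "\<eta> = u1 * u2 * u3" and units: "u1 \<in> unit_group (quad_field A)"
      "u2 \<in> unit_group (quad_field B)" "u3 \<in> unit_group (quad_field (A * B))"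
    using assms(1) by (auto simp: OK_star_real set_prod3_def)
  obtain n1 where n1: "n1 = 1 \<or> n1 = -1" "quad_norm_is A u1 (of_rat n1)"
    by (rule unit_norm_pm1_A[OF units(1)])
  obtain n2 where n2: "n2 = 1 \<or> n2 = -1" "quad_norm_is B u2 (of_rat n2)"
    by (rule unit_norm_pm1_B[OF units(2)])
  obtain n3 where n3: "n3 = 1 \<or> n3 = -1" "quad_norm_is (A * B) u3 (of_rat n3)"
    by (rule unit_norm_pm1_AB[OF units(3)])
  have "0 < n1 * n3" "0 < n2 * n3"
    using norm_signs_if_totally_signed[OF assms(1) signed \<eta> units n1(2) n2(2) n3(2)] by simp_all
  then have "n1 = n3" "n2 = n3"
    using n1(1) n2(1) n3(1) by auto
  then have "equal_norm_product \<eta> n3"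
    unfolding equal_norm_product_def using \<eta> units n1(2) n2(2) n3(2) by blast
  then show "rat_times_square K \<eta>"
    using rat_times_square_iff_equal_norm_product[OF assms(2)] n3(1) by blast
qed

lemma nonneg_norm_if_nonreal:
  assumes "\<not> K \<subseteq> \<real>" "equal_norm_product \<eta> n"
  shows "0 \<le> n"
proof -
  have "a \<noteq> 0" "b \<noteq> 0"
    using squarefree_a squarefree_b by auto
  then have "a < 0 \<or> b < 0"
    using assms(1) K_real_if_positive by force
  moreover obtain u1 u2 where "quad_norm_is A u1 (of_rat n)" "quad_norm_is B u2 (of_rat n)"
    using assms(2) unfolding equal_norm_product_def by blast
  ultimately show ?thesis
    using quad_norm_is_nonneg[OF _ A_square_rat] quad_norm_is_nonneg[OF _ B_square_rat] by auto
qed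

lemma rat_times_square_iff_OK_star_nonreal:
  assumes "\<not> K \<subseteq> \<real>" "\<eta> \<in> unit_group K"
  shows "rat_times_square K \<eta> \<longleftrightarrow> \<eta> \<in> OK_star a b"
  unfolding rat_times_square_iff_equal_norm_product[OF assms(2)] OK_star_nonreal[OF assms(1)]
  using nonneg_norm_if_nonreal[OF assms(1)] by force

lemma rat_times_square_iff_OK_star:
  assumes "\<eta> \<in> unit_group K"
  shows "rat_times_square K \<eta> \<longleftrightarrow> \<eta> \<in> OK_star a b"
  using assms rat_times_square_iff_OK_star_real rat_times_square_iff_OK_star_nonreal by blast

lemma pm_square_in_OK_star:
  assumes "u \<in> unit_group K"
  shows "u\<^sup>2 \<in> OK_star a b" "- (u\<^sup>2) \<in> OK_star a b"
proof -
  have "u \<in> ring_of_integers K"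
    using assms by (simp add: unit_group_def)
  then have "rat_times_square K (u\<^sup>2)" "rat_times_square K (- (u\<^sup>2))"
    unfolding rat_times_square_def
    by (intro bexI[of _ u] exI[of _ 1], simp_all) (intro bexI[of _ u] exI[of _ "-1"], simp_all)
  moreover have "u\<^sup>2 \<in> unit_group K"
    using unit_group_K_mult[OF assms assms] by (simp add: power2_eq_square)
  moreover have "- (u\<^sup>2) \<in> unit_group K"
    using unit_group_K_mult[OF of_rat_pm1_in_unit_group[of "-1"] \<open>u\<^sup>2 \<in> unit_group K\<close>] by simp
  ultimately show "u\<^sup>2 \<in> OK_star a b" "- (u\<^sup>2) \<in> OK_star a b"
    by (simp_all add: rat_times_square_iff_OK_star)
qed

end

theorem mainTheorem5:
  fixes a b :: int and \<eta> :: complex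
  assumes "squarefree a" and "squarefree b" and "a \<noteq> 1" and "b \<noteq> 1" and "a \<noteq> b"
    and "\<eta> \<in> unit_group (biquad_field a b)"
  shows "((\<exists>\<rho> \<in> ring_of_integers (biquad_field a b). \<exists>r :: rat. r \<noteq> 0 \<and> \<eta> = \<rho>\<^sup>2 / of_rat r)
           \<longleftrightarrow> \<eta> \<in> OK_star a b)
      \<and> (\<forall>u \<in> unit_group (biquad_field a b). u\<^sup>2 \<in> OK_star a b \<and> - (u\<^sup>2) \<in> OK_star a b)"
proof -
  interpret biquadratic a b
    using assms(1-5) by unfold_locales
  show ?thesis
    using rat_times_square_iff_OK_star[OF assms(6)] pm_square_in_OK_star
    unfolding rat_times_square_def by blast
qed

end
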